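(* Let $q \ge 2$ be a fixed integer. For a positive integer $N$, let $p$ be the unique integer such that \[ \frac{\ln q}{q-1}\, q^{p} \le N < \frac{\ln q}{q-1}\, q^{p+1}, \] and let $n = N + p$. There exist constants $N_0$ and $d > 0$ (depending on $q$ but not on $N$ or $P$) such that for every $N > N_0$ and every word $P$ of length $p$ over a $q$-letter alphabet, \[ G_P(N) \ge \frac{d\, q^n}{n^2}. \]
   Context: Fix an alphabet of size $q$. For a word $P = a_1 a_2 \cdots a_p$ of length $p$ and a positive integer $N$, $G_P(N)$ denotes the number of $q$-ary words $a_1 a_2 \cdots a_{N+p}$ (of length $N+p$) such that the factor $a_k a_{k+1} \cdots a_{k+p-1}$ equals $P$ for $k = 1$ and for $k = N+1$, and for no other $k$ with $1 \le k \le N+1$. Equivalently, $G_P(N)$ is the number of words of length $N+p$ that begin and end with $P$ and contain exactly two occurrences of $P$ as a factor. *)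

theory Defs
  imports Complex_Main
begin

text \<open>Words over the alphabet {0,...,q-1} are lists of naturals. The factor of w of
  length |P| starting at 0-indexed position k is take (length P) (drop k w).\<close>

definition q_words :: "nat \<Rightarrow> nat \<Rightarrow> nat list set" where
  "q_words q m = {w. length w = m \<and> set w \<subseteq> {..<q}}"

definition G :: "nat \<Rightarrow> nat list \<Rightarrow> nat \<Rightarrow> nat" where
  "G q P N = card {w \<in> q_words q (N + length P).
      \<forall>k \<le> N. (take (length P) (drop k w) = P \<longleftrightarrow> (k = 0 \<or> k = N))}"

end

theory Submission
  imports Defs
begin

text \<open>
  Let \<open>h(L)\<close> count the words of length \<open>L\<close> that begin with \<open>P\<close> and contain no other
  occurrence of \<open>P\<close>, and let \<open>a(L) = h(L) / q^(L-p)\<close>. Appending a letter to such a word either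
  keeps it in the class or creates an occurrence of \<open>P\<close> at its end, so
  \<open>a(L+1) \<ge> a(L) - q^(-p) a(L+1-p)\<close>. A least-period argument gives \<open>a(2p-1) \<ge> 1/2\<close>, and since
  \<open>a(L+1-p)\<close> exceeds \<open>a(L)\<close> by at most \<open>p q^(-p)\<close>, the recurrence keeps \<open>a(L)\<close> above about
  \<open>exp(-2q)/2\<close> for \<open>L < q^(p+1)\<close>. Gluing such a word of length \<open>N+1-p\<close> to a word of length
  \<open>2p-1\<close> whose only occurrence of \<open>P\<close> is at its end yields a word counted by \<open>G_P(N)\<close>, unless an
  occurrence straddles the junction, which happens for at most \<open>(p-1) q^(N-2p)\<close> pairs. Hence
  \<open>G_P(N) \<ge> c q^(N-p)\<close>, and \<open>q^p \<le> q N\<close> turns this into \<open>d q^(N+p) / (N+p)^2\<close>.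
\<close>

lemma finite_q_words: "finite (q_words q m)"
  unfolding q_words_def using finite_lists_length_eq[of "{..<q}" m] by (simp add: conj_commute)

lemma card_q_words: "card (q_words q m) = q ^ m"
  unfolding q_words_def using card_lists_length_eq[of "{..<q}" m] by (simp add: conj_commute)

lemma take_middle_drop_eq:
  assumes "a + b \<le> length w"
  shows "take a w @ take (length w - a - b) (drop a w) @ drop (length w - b) w = w"
proof -
  have "drop (length w - a - b) (drop a w) = drop (length w - b) w"
    using assms by (simp add: drop_drop)
  then have "take (length w - a - b) (drop a w) @ drop (length w - b) w = drop a w"
    by (metis append_take_drop_id)
  then show ?thesis by simp
qed

lemma card_q_words_take_drop_le:
  assumes "a + b \<le> m"
  shows "card {w \<in> q_words q m. take a w = u \<and> drop (m - b) w = v} \<le> q ^ (m - a - b)"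
proof -
  let ?S = "{w \<in> q_words q m. take a w = u \<and> drop (m - b) w = v}"
  let ?middle = "\<lambda>w. take (m - a - b) (drop a w)"
  have "inj_on ?middle ?S"
  proof (rule inj_onI)
    fix x y assume "x \<in> ?S" "y \<in> ?S" "?middle x = ?middle y"
    then show "x = y"
      using take_middle_drop_eq[of a b x] take_middle_drop_eq[of a b y] assms
      by (auto simp: q_words_def)
  qed
  then have "card ?S = card (?middle ` ?S)" by (simp add: card_image)
  also have "\<dots> \<le> card (q_words q (m - a - b))"
    by (rule card_mono[OF finite_q_words])
      (use assms in \<open>auto simp: q_words_def dest: in_set_takeD in_set_dropD\<close>)
  finally show ?thesis by (simp add: card_q_words)
qed

lemma card_q_words_take_le: "card {w \<in> q_words q m. take a w = u} \<le> q ^ (m - a)"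
proof (cases "a \<le> m")
  case True
  have "{w \<in> q_words q m. take a w = u} = {w \<in> q_words q m. take a w = u \<and> drop (m - 0) w = []}"
    by (auto simp: q_words_def)
  then show ?thesis using card_q_words_take_drop_le[of a 0 m q u "[]"] True by simp
next
  case False
  then have "{w \<in> q_words q m. take a w = u} \<subseteq> {u}" by (auto simp: q_words_def)
  then have "card {w \<in> q_words q m. take a w = u} \<le> card {u}" by (intro card_mono) auto
  then show ?thesis using False by simp
qed

lemma take_drop_eq_iff_nth:
  assumes "P \<noteq> []"
  shows "take (length P) (drop k w) = P \<longleftrightarrow>
    k + length P \<le> length w \<and> (\<forall>i < length P. w ! (k + i) = P ! i)"
proof
  assume occ: "take (length P) (drop k w) = P"
  then have "length (take (length P) (drop k w)) = length P" by simp
  then have len: "k + length P \<le> length w"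
    using assms by (cases "length w \<le> k") (auto simp: min_def split: if_splits)
  have "w ! (k + i) = P ! i" if "i < length P" for i
  proof -
    have "take (length P) (drop k w) ! i = w ! (k + i)" using that len by (simp add: nth_drop)
    then show ?thesis using occ by simp
  qed
  with len show "k + length P \<le> length w \<and> (\<forall>i < length P. w ! (k + i) = P ! i)" by blast
next
  assume occ: "k + length P \<le> length w \<and> (\<forall>i < length P. w ! (k + i) = P ! i)"
  show "take (length P) (drop k w) = P" by (rule nth_equalityI) (use occ in auto)
qed

lemma take_drop_take_eq:
  assumes "take (length P) (drop k (take m w)) = P"
  shows "take (length P) (drop k w) = P"
proof -
  have eq: "take (length P) (drop k (take m w)) = take (min (length P) (m - k)) (drop k w)"
    by (simp add: drop_take min.commute)
  show ?thesis
  proof (cases "length P \<le> m - k")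
    case True
    then show ?thesis using assms eq by (simp add: min_absorb1)
  next
    case False
    then have "length (take (length P) (drop k (take m w))) < length P" by simp
    then show ?thesis using assms by simp
  qed
qed

definition starts_only :: "nat \<Rightarrow> nat list \<Rightarrow> nat \<Rightarrow> nat list set" where
  "starts_only q P L = {w \<in> q_words q L.
      take (length P) w = P \<and> (\<forall>k>0. take (length P) (drop k w) \<noteq> P)}"

definition ends_only :: "nat \<Rightarrow> nat list \<Rightarrow> nat \<Rightarrow> nat list set" where
  "ends_only q P L = {w \<in> q_words q L.
      drop (L - length P) w = P \<and> (\<forall>k. k + length P < L \<longrightarrow> take (length P) (drop k w) \<noteq> P)}"

lemma finite_starts_only: "finite (starts_only q P L)"
  unfolding starts_only_def by (rule finite_subset[OF _ finite_q_words]) auto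

lemma finite_ends_only: "finite (ends_only q P L)"
  unfolding ends_only_def by (rule finite_subset[OF _ finite_q_words]) auto

lemma card_starts_only_le: "card (starts_only q P L) \<le> q ^ (L - length P)"
proof -
  have "starts_only q P L \<subseteq> {w \<in> q_words q L. take (length P) w = P}"
    by (auto simp: starts_only_def)
  then have "card (starts_only q P L) \<le> card {w \<in> q_words q L. take (length P) w = P}"
    by (intro card_mono) (auto intro: finite_subset[OF _ finite_q_words])
  also have "\<dots> \<le> q ^ (L - length P)" by (rule card_q_words_take_le)
  finally show ?thesis .
qed

lemma take_in_starts_only:
  assumes w: "w \<in> starts_only q P L" and "length P \<le> m" "m \<le> L"
  shows "take m w \<in> starts_only q P m"
  using assms take_drop_take_eq[of P _ m w]
  by (auto simp: starts_only_def q_words_def min_def dest: in_set_takeD)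

lemma snoc_starts_only_cases:
  assumes w: "w \<in> starts_only q P L" and c: "c < q" and L: "2 * length P \<le> L + 1"
  shows "w @ [c] \<in> starts_only q P (L + 1) \<or>
    (\<exists>y \<in> starts_only q P (L + 1 - length P). w @ [c] = y @ P)"
proof (cases "\<exists>k>0. take (length P) (drop k (w @ [c])) = P")
  case False
  have "w @ [c] \<in> q_words q (L + 1)" "take (length P) (w @ [c]) = P"
    using w c L by (auto simp: starts_only_def q_words_def)
  with False show ?thesis unfolding starts_only_def by blast
next
  case True
  then obtain k where "0 < k" and occ: "take (length P) (drop k (w @ [c])) = P" by blast
  have lw: "length w = L" and no_occ: "\<And>k. 0 < k \<Longrightarrow> take (length P) (drop k w) \<noteq> P"
    using w by (auto simp: starts_only_def q_words_def)
  then have "P \<noteq> []" by fastforce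
  then have "0 < length P" by simp
  then have "k + length P \<le> L + 1"
    using occ lw take_drop_eq_iff_nth[of P k "w @ [c]"] by simp
  moreover have "\<not> k + length P \<le> L"
    using occ no_occ[OF \<open>0 < k\<close>] lw by auto
  ultimately have k: "k = L + 1 - length P" by linarith
  have "drop k (w @ [c]) = P"
    using occ k lw L by simp
  moreover have "take k (w @ [c]) = take k w"
    using k lw \<open>P \<noteq> []\<close> by (simp add: Suc_le_eq)
  ultimately have "w @ [c] = take k w @ P"
    by (metis append_take_drop_id)
  moreover have "length P \<le> k" "k \<le> L" using k L \<open>0 < length P\<close> by arith+
  then have "take k w \<in> starts_only q P k" by (rule take_in_starts_only[OF w])
  ultimately show ?thesis using k by blast
qed

lemma card_starts_only_step:
  assumes "2 * length P \<le> L + 1"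
  shows "q * card (starts_only q P L)
    \<le> card (starts_only q P (L + 1)) + card (starts_only q P (L + 1 - length P))"
proof -
  let ?snoc = "\<lambda>(w, c). w @ [c]"
  let ?X = "starts_only q P L \<times> {..<q}"
  let ?E = "(\<lambda>y. y @ P) ` starts_only q P (L + 1 - length P)"
  have "inj_on ?snoc ?X" by (rule inj_onI) auto
  then have "q * card (starts_only q P L) = card (?snoc ` ?X)"
    by (simp add: card_image card_cartesian_product)
  also have "\<dots> \<le> card (starts_only q P (L + 1) \<union> ?E)"
    using snoc_starts_only_cases[OF _ _ assms]
    by (intro card_mono) (auto simp: finite_starts_only)
  also have "\<dots> \<le> card (starts_only q P (L + 1)) + card ?E" by (rule card_Un_le)
  also have "\<dots> \<le> card (starts_only q P (L + 1)) + card (starts_only q P (L + 1 - length P))"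
    by (intro add_left_mono card_image_le finite_starts_only)
  finally show ?thesis .
qed

lemma occurrence_across_append:
  assumes "length A - length P < j" "j < length A"
    and occ: "take (length P) (drop j (A @ B)) = P"
  shows "drop j A = take (length A - j) P"
    and "take (length P - (length A - j)) B = drop (length A - j) P"
proof -
  have "take (length P) (drop j (A @ B)) = drop j A @ take (length P - (length A - j)) B"
    using assms(1,2) by simp
  then have "drop j A @ take (length P - (length A - j)) B
      = take (length A - j) P @ drop (length A - j) P"
    using occ by simp
  moreover have "length (drop j A) = length (take (length A - j) P)" using assms(1,2) by simp
  ultimately have "drop j A = take (length A - j) P \<and>
      take (length P - (length A - j)) B = drop (length A - j) P"
    using append_eq_append_conv[of "drop j A" "take (length A - j) P"] by blast
  then show "drop j A = take (length A - j) P"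
    and "take (length P - (length A - j)) B = drop (length A - j) P" by simp_all
qed

lemma occurrence_in_extension:
  assumes "length x < length P" "0 < k" and occ: "take (length P) (drop k (P @ x)) = P"
  shows "k < length P" "drop k P = take (length P - k) P" "take k x = drop (length P - k) P"
proof -
  have "P \<noteq> []" using assms(1) by auto
  then have "k + length P \<le> length P + length x"
    using occ take_drop_eq_iff_nth[of P k "P @ x"] by simp
  then show k: "k < length P" using assms(1) by simp
  have "length P - length P < k" using assms(2) by simp
  from occurrence_across_append[OF this k occ] k
  show "drop k P = take (length P - k) P" "take k x = drop (length P - k) P" by simp_all
qed

lemma period_nth:
  assumes "drop r P = take (length P - r) P" "i + r < length P"
  shows "P ! (i + r) = P ! i"
proof -
  have "drop r P ! i = take (length P - r) P ! i" using assms(1) by simp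
  then show ?thesis using assms(2) by (simp add: add.commute)
qed

lemma occurrence_shift:
  assumes per: "drop r P = take (length P - r) P" and rk: "r < k" "k \<le> length P - r"
    and pre: "take (length P) W = P" and occ: "take (length P) (drop k W) = P"
  shows "take (length P) (drop r W) = P"
proof -
  let ?p = "length P"
  have "P \<noteq> []" using rk by auto
  then have len: "k + ?p \<le> length W" and occ_nth: "\<And>i. i < ?p \<Longrightarrow> W ! (k + i) = P ! i"
    using occ take_drop_eq_iff_nth[of P k W] by auto
  have pre_nth: "W ! j = P ! j" if "j < ?p" for j
    using pre that nth_take[of j ?p W] by simp
  have per_k: "P ! (j + k) = P ! j" if "j + k < ?p" for j
    using pre_nth[of "k + j"] occ_nth[of j] that by (simp add: add.commute)
  have per_r: "P ! (j + r) = P ! j" if "j + r < ?p" for j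
    using period_nth[OF per that] .
  have "W ! (r + i) = P ! i" if i: "i < ?p" for i
  proof (cases "r + i < ?p")
    case True
    then show ?thesis using pre_nth per_r[of i] by (simp add: add.commute)
  next
    case False
    then have "k \<le> i" using rk by simp
    have "W ! (r + i) = W ! (k + (r + i - k))" using rk \<open>k \<le> i\<close> by simp
    also have "\<dots> = P ! (r + i - k)" using occ_nth rk i by simp
    also have "\<dots> = P ! (i - k)" using per_r[of "i - k"] \<open>k \<le> i\<close> i rk by (simp add: add.commute)
    also have "\<dots> = P ! i" using per_k[of "i - k"] \<open>k \<le> i\<close> i by simp
    finally show ?thesis .
  qed
  moreover have "r + ?p \<le> length W" using len rk by simp
  ultimately show ?thesis using take_drop_eq_iff_nth[OF \<open>P \<noteq> []\<close>] by blast
qed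

definition least_period :: "nat list \<Rightarrow> nat" where
  "least_period P = (LEAST r. 0 < r \<and> drop r P = take (length P - r) P)"

lemma least_period:
  assumes "P \<noteq> []"
  shows "0 < least_period P" "drop (least_period P) P = take (length P - least_period P) P"
    and "\<And>k. 0 < k \<Longrightarrow> drop k P = take (length P - k) P \<Longrightarrow> least_period P \<le> k"
proof -
  have "0 < length P \<and> drop (length P) P = take (length P - length P) P" using assms by simp
  then show "0 < least_period P" "drop (least_period P) P = take (length P - least_period P) P"
    unfolding least_period_def by (metis (mono_tags, lifting) LeastI)+
  show "\<And>k. 0 < k \<Longrightarrow> drop k P = take (length P - k) P \<Longrightarrow> least_period P \<le> k"
    unfolding least_period_def by (simp add: Least_le)
qed

lemma extension_occurrence_cases:
  assumes x: "length x < length P" and "0 < k" and occ: "take (length P) (drop k (P @ x)) = P"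
  defines "r \<equiv> least_period P"
  shows "take r x = drop (length P - r) P \<or>
    (max r (length P - r) < k \<and> k < length P \<and> take k x = drop (length P - k) P)"
proof -
  note k = occurrence_in_extension[OF x \<open>0 < k\<close> occ]
  have "P \<noteq> []" using x by auto
  note r = least_period[OF this, folded r_def]
  have "r \<le> k" using r(3)[OF \<open>0 < k\<close> k(2)] .
  show ?thesis
  proof (cases "r < k \<and> k \<le> length P - r")
    case True
    have "take (length P) (P @ x) = P" by simp
    with True have "take (length P) (drop r (P @ x)) = P"
      using occurrence_shift[OF r(2) _ _ _ occ] by blast
    then show ?thesis using occurrence_in_extension(3)[OF x r(1)] by blast
  next
    case False
    then have "k = r \<or> max r (length P - r) < k" using \<open>r \<le> k\<close> by linarith
    then show ?thesis using k(1,3) by blast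
  qed
qed

lemma sum_power_lessThan_less:
  assumes "2 \<le> (q::nat)"
  shows "(\<Sum>j<m. q ^ j) < q ^ m"
proof (induction m)
  case (Suc m)
  then have "(\<Sum>j<Suc m. q ^ j) < 2 * q ^ m" by simp
  also have "\<dots> \<le> q ^ Suc m" using assms by simp
  finally show ?case .
qed simp

text \<open>An extension with a second occurrence of \<open>P\<close> is determined either on its prefix of
  length \<open>r\<close>, the least period of \<open>P\<close>, or on a prefix of some length beyond
  \<open>max r (length P - r)\<close>; the latter are geometrically few.\<close>

lemma card_bad_extensions_less:
  assumes q: "2 \<le> q" and "P \<noteq> []"
  defines "r \<equiv> least_period P"
  shows "card {x \<in> q_words q (length P - 1). \<exists>k>0. take (length P) (drop k (P @ x)) = P}
    < q ^ (length P - 1 - r) + q ^ (length P - 1 - max r (length P - r))"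
proof -
  define p where "p = length P"
  define m where "m = max r (p - r)"
  define Bad where "Bad = {x \<in> q_words q (p - 1). \<exists>k>0. take p (drop k (P @ x)) = P}"
  define B where "B k = {x \<in> q_words q (p - 1). take k x = drop (p - k) P}" for k
  have card_B: "card (B k) \<le> q ^ (p - 1 - k)" for k
    unfolding B_def by (rule card_q_words_take_le)
  have fin_B: "finite (B k)" for k
    unfolding B_def by (rule finite_subset[OF _ finite_q_words]) auto
  have "Bad \<subseteq> B r \<union> (\<Union>j<p - 1 - m. B (p - 1 - j))"
  proof
    fix x assume "x \<in> Bad"
    then obtain k where x: "x \<in> q_words q (p - 1)" and "0 < k" and occ: "take p (drop k (P @ x)) = P"
      by (auto simp: Bad_def)
    have "length x < length P" using x \<open>P \<noteq> []\<close> by (simp add: q_words_def p_def)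
    from extension_occurrence_cases[OF this \<open>0 < k\<close>] occ
    have "x \<in> B r \<or> (m < k \<and> k < p \<and> x \<in> B k)"
      using x by (auto simp: B_def m_def p_def r_def)
    moreover have "B k = B (p - 1 - (p - 1 - k))" "p - 1 - k < p - 1 - m" if "m < k" "k < p"
      using that by simp_all
    ultimately show "x \<in> B r \<union> (\<Union>j<p - 1 - m. B (p - 1 - j))" by blast
  qed
  then have "card Bad \<le> card (B r \<union> (\<Union>j<p - 1 - m. B (p - 1 - j)))"
    by (intro card_mono) (simp_all add: fin_B)
  also have "\<dots> \<le> card (B r) + card (\<Union>j<p - 1 - m. B (p - 1 - j))" by (rule card_Un_le)
  also have "card (\<Union>j<p - 1 - m. B (p - 1 - j)) \<le> (\<Sum>j<p - 1 - m. card (B (p - 1 - j)))"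
    by (rule card_UN_le) simp
  also have "\<dots> \<le> (\<Sum>j<p - 1 - m. q ^ j)"
  proof (rule sum_mono)
    fix j assume "j \<in> {..<p - 1 - m}"
    then have "p - 1 - (p - 1 - j) = j" by simp
    then show "card (B (p - 1 - j)) \<le> q ^ j" using card_B[of "p - 1 - j"] by simp
  qed
  finally show ?thesis
    using card_B[of r] sum_power_lessThan_less[OF q, of "p - 1 - m"]
    unfolding Bad_def p_def m_def by linarith
qed

lemma card_bad_extensions_le:
  assumes q: "2 \<le> q" and p: "3 \<le> length P"
  shows "2 * card {x \<in> q_words q (length P - 1). \<exists>k>0. take (length P) (drop k (P @ x)) = P}
    \<le> q ^ (length P - 1)"
proof -
  define p where "p = length P"
  define r where "r = least_period P"
  have "P \<noteq> []" using p by (cases P) auto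
  then have "0 < r" using least_period(1) by (simp add: r_def)
  have "2 * (q ^ (p - 1 - r) + q ^ (p - 1 - max r (p - r))) \<le> q ^ (p - 1) + 2"
  proof (cases "r = 1")
    case True
    then have "p - 1 - max r (p - r) = 0" using p by (simp add: p_def)
    moreover have "p - 1 = Suc (p - 2)" using p by (simp add: p_def)
    then have "q ^ (p - 1) = q * q ^ (p - 2)" by simp
    moreover have "2 * q ^ (p - 2) \<le> q * q ^ (p - 2)" using q by simp
    ultimately show ?thesis using True by (simp add: numeral_2_eq_2)
  next
    case False
    then have "2 \<le> r" using \<open>0 < r\<close> by simp
    then have "q ^ (p - 1 - r) \<le> q ^ (p - 3)" "q ^ (p - 1 - max r (p - r)) \<le> q ^ (p - 3)"
      using q by (simp_all add: power_increasing)
    then have "q ^ (p - 1 - r) + q ^ (p - 1 - max r (p - r)) \<le> q ^ (p - 3) + q ^ (p - 3)"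
      by (rule add_le_mono)
    then have "2 * (q ^ (p - 1 - r) + q ^ (p - 1 - max r (p - r))) \<le> 4 * q ^ (p - 3)" by simp
    also have "\<dots> \<le> q ^ 2 * q ^ (p - 3)"
      using power_mono[OF q, of 2] by (intro mult_right_mono) simp_all
    also have "\<dots> = q ^ (2 + (p - 3))" by (simp only: power_add)
    also have "2 + (p - 3) = p - 1" using p by (simp add: p_def)
    finally show ?thesis by simp
  qed
  moreover have "2 * c \<le> Q" if "c < a" "2 * a \<le> Q + 2" for a c Q :: nat using that by linarith
  ultimately show ?thesis
    using card_bad_extensions_less[OF q \<open>P \<noteq> []\<close>] unfolding p_def r_def by blast
qed

lemma card_starts_only_double_length:
  assumes q: "2 \<le> q" and p: "3 \<le> length P" and P: "set P \<subseteq> {..<q}"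
  shows "q ^ (length P - 1) \<le> 2 * card (starts_only q P (2 * length P - 1))"
proof -
  let ?p = "length P"
  define Good where "Good = {x \<in> q_words q (?p - 1). \<forall>k>0. take ?p (drop k (P @ x)) \<noteq> P}"
  define Bad where "Bad = {x \<in> q_words q (?p - 1). \<exists>k>0. take ?p (drop k (P @ x)) = P}"
  have "Good \<union> Bad = q_words q (?p - 1)" "Good \<inter> Bad = {}"
    unfolding Good_def Bad_def by auto
  then have "card Good + card Bad = q ^ (?p - 1)"
    by (metis card_Un_disjoint card_q_words finite_Un finite_q_words)
  moreover have "card Good \<le> card (starts_only q P (2 * ?p - 1))"
  proof -
    have "inj_on (\<lambda>x. P @ x) Good" by (rule inj_onI) simp
    moreover have "(\<lambda>x. P @ x) ` Good \<subseteq> starts_only q P (2 * ?p - 1)"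
      using P p by (auto simp: Good_def starts_only_def q_words_def)
    ultimately show ?thesis
      by (metis card_image card_mono finite_starts_only)
  qed
  moreover have "2 * card Bad \<le> q ^ (?p - 1)"
    unfolding Bad_def by (rule card_bad_extensions_le[OF q p])
  ultimately show ?thesis by linarith
qed

lemma take_drop_rev:
  assumes "k + p \<le> length w"
  shows "take p (drop k (rev w)) = rev (take p (drop (length w - k - p) w))"
proof (rule nth_equalityI)
  show "length (take p (drop k (rev w))) = length (rev (take p (drop (length w - k - p) w)))"
    using assms by simp
  fix i assume "i < length (take p (drop k (rev w)))"
  then have i: "i < p" using assms by simp
  then show "take p (drop k (rev w)) ! i = rev (take p (drop (length w - k - p) w)) ! i"
    using assms by (simp add: rev_nth)
qed

lemma rev_starts_only_subset_ends_only: "rev ` starts_only q (rev P) L \<subseteq> ends_only q P L"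
proof
  fix v assume "v \<in> rev ` starts_only q (rev P) L"
  then obtain w where w: "w \<in> starts_only q (rev P) L" and v: "v = rev w" by blast
  have lw: "length w = L" and "set w \<subseteq> {..<q}" and pre: "take (length P) w = rev P"
    and no_occ: "\<And>k. 0 < k \<Longrightarrow> take (length P) (drop k w) \<noteq> rev P"
    using w by (auto simp: starts_only_def q_words_def)
  then have "v \<in> q_words q L" using v by (simp add: q_words_def)
  moreover have "drop (L - length P) v = P"
    using pre lw v rev_take[of "length P" w] by simp
  moreover have "take (length P) (drop k v) \<noteq> P" if "k + length P < L" for k
  proof -
    have "take (length P) (drop k v) = rev (take (length P) (drop (L - k - length P) w))"
      using take_drop_rev[of k "length P" w] that lw v by simp
    moreover have "0 < L - k - length P" using that by simp
    ultimately show ?thesis using no_occ by (metis rev_rev_ident)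
  qed
  ultimately show "v \<in> ends_only q P L" by (simp add: ends_only_def)
qed

lemma card_starts_only_rev_le: "card (starts_only q (rev P) L) \<le> card (ends_only q P L)"
proof -
  have "card (starts_only q (rev P) L) = card (rev ` starts_only q (rev P) L)"
    by (simp add: card_image)
  also have "\<dots> \<le> card (ends_only q P L)"
    by (intro card_mono finite_ends_only rev_starts_only_subset_ends_only)
  finally show ?thesis .
qed

lemma append_starts_ends_only_occurrence_iff:
  assumes A: "A \<in> starts_only q P m1" and B: "B \<in> ends_only q P m2"
    and m2: "length P \<le> m2" and N: "N + length P = m1 + m2" and "k \<le> N"
    and no_straddle: "\<And>j. m1 - length P < j \<Longrightarrow> j < m1 \<Longrightarrow> take (length P) (drop j (A @ B)) \<noteq> P"
  shows "take (length P) (drop k (A @ B)) = P \<longleftrightarrow> k = 0 \<or> k = N"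
proof -
  let ?p = "length P"
  have lA: "length A = m1" and preA: "take ?p A = P"
    and noA: "\<And>k. 0 < k \<Longrightarrow> take ?p (drop k A) \<noteq> P"
    using A by (auto simp: starts_only_def q_words_def)
  have lB: "length B = m2" and sufB: "drop (m2 - ?p) B = P"
    and noB: "\<And>k. k + ?p < m2 \<Longrightarrow> take ?p (drop k B) \<noteq> P"
    using B by (auto simp: ends_only_def q_words_def)
  have "?p \<le> m1" using preA lA by (metis length_take min.absorb_iff2 nat_le_linear)
  have occ_0: "take ?p (drop 0 (A @ B)) = P" using preA \<open>?p \<le> m1\<close> lA by simp
  have "m1 \<le> N" "N - m1 = m2 - ?p" using N m2 by linarith+
  then have "drop N (A @ B) = drop (m2 - ?p) B" using lA by simp
  then have occ_N: "take ?p (drop N (A @ B)) = P" using sufB by simp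
  have "k = 0 \<or> k = N" if occ: "take ?p (drop k (A @ B)) = P"
  proof (rule ccontr)
    assume "\<not> (k = 0 \<or> k = N)"
    then have "0 < k" "k < N" using \<open>k \<le> N\<close> by auto
    have "k + ?p \<le> m1 \<or> m1 \<le> k \<or> m1 - ?p < k \<and> k < m1"
      using \<open>0 < k\<close> by arith
    then consider "k + ?p \<le> m1" | "m1 \<le> k" | "m1 - ?p < k \<and> k < m1" by blast
    then show False
    proof cases
      case 1
      then have "take ?p (drop k (A @ B)) = take ?p (drop k A)" using lA by simp
      then show False using occ noA[OF \<open>0 < k\<close>] by metis
    next
      case 2
      then have "take ?p (drop k (A @ B)) = take ?p (drop (k - m1) B)" using lA by simp
      moreover have "k - m1 + ?p < m2" using 2 \<open>k < N\<close> N by linarith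
      ultimately show False using occ noB by metis
    next
      case 3
      then show False using no_straddle occ by blast
    qed
  qed
  then show ?thesis using occ_0 occ_N by auto
qed

lemma card_straddling_pairs_le:
  assumes m1: "2 * length P \<le> m1 + 1" and m2: "2 * length P \<le> m2 + 1"
    and N: "N + length P = m1 + m2"
  shows "card {(A, B) \<in> starts_only q P m1 \<times> ends_only q P m2.
      \<exists>j. m1 - length P < j \<and> j < m1 \<and> take (length P) (drop j (A @ B)) = P}
    \<le> (length P - 1) * q ^ (N - 2 * length P)"
proof -
  let ?p = "length P"
  define X where "X i = {A \<in> q_words q m1. take ?p A = P \<and> drop (m1 - i) A = take i P}" for i
  define Z where "Z i = {B \<in> q_words q m2. take (?p - i) B = drop i P \<and> drop (m2 - ?p) B = P}"
    for i
  have fin_X: "finite (X i)" and fin_Z: "finite (Z i)" for i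
    unfolding X_def Z_def by (auto intro: finite_subset[OF _ finite_q_words])
  have "{(A, B) \<in> starts_only q P m1 \<times> ends_only q P m2.
      \<exists>j. m1 - ?p < j \<and> j < m1 \<and> take ?p (drop j (A @ B)) = P} \<subseteq> (\<Union>i\<in>{1..<?p}. X i \<times> Z i)"
  proof
    fix AB
    assume "AB \<in> {(A, B) \<in> starts_only q P m1 \<times> ends_only q P m2.
      \<exists>j. m1 - ?p < j \<and> j < m1 \<and> take ?p (drop j (A @ B)) = P}"
    then obtain A B j where AB: "AB = (A, B)"
      and A: "A \<in> starts_only q P m1" and B: "B \<in> ends_only q P m2"
      and j: "m1 - ?p < j" "j < m1" and occ: "take ?p (drop j (A @ B)) = P"
      by blast
    have lA: "length A = m1" using A by (simp add: starts_only_def q_words_def)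
    note straddle = occurrence_across_append[of A P j B, unfolded lA, OF j occ]
    have "A \<in> X (m1 - j)" using A straddle(1) j by (auto simp: X_def starts_only_def)
    moreover have "B \<in> Z (m1 - j)" using B straddle(2) by (simp add: Z_def ends_only_def)
    moreover have "m1 - j \<in> {1..<?p}" using j by auto
    ultimately show "AB \<in> (\<Union>i\<in>{1..<?p}. X i \<times> Z i)" using AB by blast
  qed
  then have "card {(A, B) \<in> starts_only q P m1 \<times> ends_only q P m2.
      \<exists>j. m1 - ?p < j \<and> j < m1 \<and> take ?p (drop j (A @ B)) = P}
      \<le> card (\<Union>i\<in>{1..<?p}. X i \<times> Z i)"
    by (intro card_mono) (auto simp: fin_X fin_Z)
  also have "\<dots> \<le> (\<Sum>i\<in>{1..<?p}. card (X i) * card (Z i))"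
    using card_UN_le[of "{1..<?p}" "\<lambda>i. X i \<times> Z i"] by (simp add: card_cartesian_product)
  also have "\<dots> \<le> (\<Sum>i\<in>{1..<?p}. q ^ (N - 2 * ?p))"
  proof (rule sum_mono)
    fix i assume i: "i \<in> {1..<?p}"
    have "card (X i) \<le> q ^ (m1 - ?p - i)"
      unfolding X_def by (rule card_q_words_take_drop_le) (use i m1 in auto)
    moreover have "card (Z i) \<le> q ^ (m2 - (?p - i) - ?p)"
      unfolding Z_def by (rule card_q_words_take_drop_le) (use i m2 in auto)
    ultimately have "card (X i) * card (Z i) \<le> q ^ (m1 - ?p - i) * q ^ (m2 - (?p - i) - ?p)"
      by (rule mult_le_mono)
    also have "\<dots> = q ^ (m1 - ?p - i + (m2 - (?p - i) - ?p))" by (simp add: power_add)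
    also have "m1 - ?p - i + (m2 - (?p - i) - ?p) = N - 2 * ?p" using i m1 m2 N by auto
    finally show "card (X i) * card (Z i) \<le> q ^ (N - 2 * ?p)" .
  qed
  also have "\<dots> = (?p - 1) * q ^ (N - 2 * ?p)" by simp
  finally show ?thesis .
qed

lemma card_starts_ends_only_le_G:
  assumes m1: "2 * length P \<le> m1 + 1" and m2: "2 * length P \<le> m2 + 1"
    and N: "N + length P = m1 + m2"
  shows "card (starts_only q P m1) * card (ends_only q P m2)
    \<le> G q P N + (length P - 1) * q ^ (N - 2 * length P)"
proof -
  let ?p = "length P"
  let ?Y = "starts_only q P m1 \<times> ends_only q P m2"
  let ?W = "{w \<in> q_words q (N + ?p). \<forall>k\<le>N. (take ?p (drop k w) = P) = (k = 0 \<or> k = N)}"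
  let ?app = "\<lambda>(A, B). A @ B"
  define S where "S = {(A, B) \<in> ?Y. \<exists>j. m1 - ?p < j \<and> j < m1 \<and> take ?p (drop j (A @ B)) = P}"
  have fin_Y: "finite ?Y" by (simp add: finite_starts_only finite_ends_only)
  have sub: "?app ` (?Y - S) \<subseteq> ?W"
  proof
    fix w assume "w \<in> ?app ` (?Y - S)"
    then obtain A B where A: "A \<in> starts_only q P m1" and B: "B \<in> ends_only q P m2"
      and "(A, B) \<notin> S" and w: "w = A @ B" by auto
    then have no_straddle:
      "\<And>j. m1 - ?p < j \<Longrightarrow> j < m1 \<Longrightarrow> take ?p (drop j (A @ B)) \<noteq> P"
      by (auto simp: S_def)
    have "?p \<le> m2" using m1 m2 by linarith
    note occurrences = append_starts_ends_only_occurrence_iff[OF A B this N _ no_straddle]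
    have "A @ B \<in> q_words q (N + ?p)"
      using A B N by (auto simp: starts_only_def ends_only_def q_words_def)
    with occurrences show "w \<in> ?W" using w by blast
  qed
  have inj: "inj_on ?app ?Y"
  proof (rule inj_onI)
    fix x y assume "x \<in> ?Y" "y \<in> ?Y" and app: "?app x = ?app y"
    then obtain A B A' B' where x: "x = (A, B)" and y: "y = (A', B')"
      and "length A = m1" "length A' = m1"
      by (auto simp: starts_only_def q_words_def)
    then show "x = y" using app by simp
  qed
  have "card (?Y - S) = card (?app ` (?Y - S))"
    using inj_on_diff[OF inj] by (simp add: card_image)
  also have "\<dots> \<le> card ?W"
    by (rule card_mono[OF finite_subset[OF _ finite_q_words] sub]) blast
  finally have "card (?Y - S) \<le> card ?W" .
  moreover have "card S \<le> (?p - 1) * q ^ (N - 2 * ?p)"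
    unfolding S_def by (rule card_straddling_pairs_le[OF m1 m2 N])
  moreover have "card ?Y \<le> card (?Y - S) + card S"
  proof -
    have "S \<subseteq> ?Y" unfolding S_def by blast
    then show ?thesis using fin_Y by (simp add: card_Diff_subset card_mono finite_subset)
  qed
  ultimately show ?thesis by (simp add: G_def card_cartesian_product)
qed

lemma delayed_recurrence_drift:
  fixes a :: "nat \<Rightarrow> real"
  assumes a01: "\<And>L. 0 \<le> a L \<and> a L \<le> 1"
    and rec: "\<And>L. s \<le> L \<Longrightarrow> a L - e * a (L + 1 - p) \<le> a (L + 1)"
    and "0 \<le> e" "s \<le> j"
  shows "a j - a (j + t) \<le> real t * e"
proof (induction t)
  case (Suc t)
  have "a (j + t) - e * a (j + t + 1 - p) \<le> a (j + t + 1)" using rec[of "j + t"] \<open>s \<le> j\<close> by simp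
  moreover have "e * a (j + t + 1 - p) \<le> e" using a01 \<open>0 \<le> e\<close> by (simp add: mult_left_le)
  ultimately show ?case using Suc.IH by (simp add: algebra_simps)
qed simp

lemma delayed_recurrence_step:
  fixes a :: "nat \<Rightarrow> real"
  assumes a01: "\<And>L. 0 \<le> a L \<and> a L \<le> 1"
    and rec: "\<And>L. s \<le> L \<Longrightarrow> a L - e * a (L + 1 - p) \<le> a (L + 1)"
    and e: "0 \<le> e" and L: "s + p \<le> L + 1" "1 \<le> p"
  shows "(1 - e) * a L - real p * e ^ 2 \<le> a (L + 1)"
proof -
  have "s \<le> L + 1 - p" using L(1) by linarith
  then have "a (L + 1 - p) - a (L + 1 - p + (p - 1)) \<le> real (p - 1) * e"
    using delayed_recurrence_drift[where j = "L + 1 - p" and t = "p - 1"] a01 rec e by blast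
  moreover have "L + 1 - p + (p - 1) = L" using L by simp
  moreover have "real (p - 1) * e \<le> real p * e" using e by (intro mult_right_mono) simp_all
  ultimately have "a (L + 1 - p) \<le> a L + real p * e" by simp
  then have "e * a (L + 1 - p) \<le> e * (a L + real p * e)" by (rule mult_left_mono[OF _ e])
  moreover have "e * (a L + real p * e) = e * a L + real p * e ^ 2"
    by (simp add: power2_eq_square algebra_simps)
  moreover have "a L - e * a (L + 1 - p) \<le> a (L + 1)" using rec[of L] L by simp
  moreover have "(1 - e) * a L = a L - e * a L" by (simp add: algebra_simps)
  ultimately show ?thesis by linarith
qed

lemma delayed_recurrence_lower_bound:
  fixes a :: "nat \<Rightarrow> real"
  assumes a01: "\<And>L. 0 \<le> a L \<and> a L \<le> 1"
    and rec: "\<And>L. s \<le> L \<Longrightarrow> a L - e * a (L + 1 - p) \<le> a (L + 1)"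
    and e: "0 \<le> e" "e \<le> 1" and c0: "0 \<le> c0" "c0 \<le> a s" and "1 \<le> p"
  shows "(1 - e) ^ n * c0 - real (min n p) * e - real n * real p * e ^ 2 \<le> a (s + n)"
proof (induction n)
  case (Suc n)
  define D where "D = real (min n p) * e + real n * real p * e ^ 2"
  have IH: "(1 - e) ^ n * c0 - D \<le> a (s + n)" using Suc.IH by (simp add: D_def)
  have "0 \<le> D" using e by (simp add: D_def)
  have decay: "(1 - e) ^ Suc n * c0 \<le> (1 - e) ^ n * c0"
    using e c0 by (simp add: mult_left_le_one_le mult.assoc)
  show ?case
  proof (cases "n < p")
    case True
    have "e * a (s + n + 1 - p) \<le> e" using a01 e by (simp add: mult_left_le)
    then have "a (s + n) - e \<le> a (s + n + 1)" using rec[of "s + n"] by simp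
    moreover have "real (min (Suc n) p) * e = real (min n p) * e + e"
      using True by (simp add: algebra_simps)
    moreover have "0 \<le> real p * e ^ 2" by simp
    moreover have "real (Suc n) * real p * e ^ 2 = real n * real p * e ^ 2 + real p * e ^ 2"
      by (simp add: algebra_simps)
    moreover have "a (s + Suc n) = a (s + n + 1)" by simp
    ultimately show ?thesis using IH decay unfolding D_def by linarith
  next
    case False
    have "s + p \<le> s + n + 1" using False by linarith
    then have "(1 - e) * a (s + n) - real p * e ^ 2 \<le> a (s + n + 1)"
      using delayed_recurrence_step[where L = "s + n"] a01 rec e(1) \<open>1 \<le> p\<close> by blast
    moreover have "(1 - e) * ((1 - e) ^ n * c0 - D) \<le> (1 - e) * a (s + n)"
      using IH e by (intro mult_left_mono) auto
    moreover have "(1 - e) * D \<le> D" using \<open>0 \<le> D\<close> e by (simp add: mult_left_le_one_le)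
    moreover have "real (min (Suc n) p) = real (min n p)" using False by simp
    ultimately show ?thesis unfolding D_def by (simp add: algebra_simps)
  qed
qed (use c0 in simp)

lemma exp_le_one_minus_power:
  fixes e :: real
  assumes "0 \<le> e" "e \<le> 1/2" "real n * e \<le> c"
  shows "exp (- 2 * c) \<le> (1 - e) ^ n"
proof -
  have "- 2 * e \<le> - e - 2 * e ^ 2"
    using mult_left_mono[of "2 * e" 1 e] assms by (simp add: power2_eq_square algebra_simps)
  also have "\<dots> \<le> ln (1 - e)" by (rule ln_one_minus_pos_lower_bound[OF assms(1,2)])
  finally have "exp (- 2 * e) \<le> exp (ln (1 - e))" by simp
  then have "exp (- 2 * e) \<le> 1 - e" using assms by simp
  then have "exp (- 2 * e) ^ n \<le> (1 - e) ^ n" by (intro power_mono) simp_all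
  moreover have "exp (- 2 * c) \<le> exp (- 2 * e) ^ n"
    using assms(3) by (simp add: exp_of_nat_mult[symmetric] algebra_simps)
  ultimately show ?thesis by linarith
qed

definition starts_only_density :: "nat \<Rightarrow> nat list \<Rightarrow> nat \<Rightarrow> real" where
  "starts_only_density q P L = card (starts_only q P L) / real q ^ (L - length P)"

lemma starts_only_density_bounds: "0 \<le> starts_only_density q P L \<and> starts_only_density q P L \<le> 1"
proof -
  have "real (card (starts_only q P L)) \<le> real q ^ (L - length P)"
    using card_starts_only_le[of q P L] by (metis of_nat_le_iff of_nat_power)
  then show ?thesis unfolding starts_only_density_def by (auto simp: divide_le_eq_1)
qed

lemma starts_only_density_step:
  assumes q: "0 < q" and L: "2 * length P \<le> L + 1"
  shows "starts_only_density q P L - starts_only_density q P (L + 1 - length P) / real q ^ length P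
    \<le> starts_only_density q P (L + 1)"
proof -
  let ?p = "length P"
  let ?h = "\<lambda>L. real (card (starts_only q P L))"
  define T where "T = real q ^ (L + 1 - ?p)"
  have "T > 0" using q by (simp add: T_def)
  have "L + 1 - ?p = Suc (L - ?p)" "L + 1 - ?p = ?p + (L + 1 - ?p - ?p)" using L by linarith+
  then have T: "T = real q * real q ^ (L - ?p)" "T = real q ^ ?p * real q ^ (L + 1 - ?p - ?p)"
    unfolding T_def by (metis power_Suc, metis power_add)
  have "real q * ?h L \<le> ?h (L + 1) + ?h (L + 1 - ?p)"
    using card_starts_only_step[OF L, of q] by (metis of_nat_add of_nat_le_iff of_nat_mult)
  then have "(real q * ?h L - ?h (L + 1 - ?p)) / T \<le> ?h (L + 1) / T"
    using \<open>T > 0\<close> by (intro divide_right_mono) auto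
  moreover have "starts_only_density q P L = real q * ?h L / T"
    using T(1) q by (simp add: starts_only_density_def)
  moreover have "starts_only_density q P (L + 1 - ?p) / real q ^ ?p = ?h (L + 1 - ?p) / T"
    using T(2) by (simp add: starts_only_density_def)
  moreover have "starts_only_density q P (L + 1) = ?h (L + 1) / T"
    by (simp add: starts_only_density_def T_def)
  ultimately show ?thesis by (simp add: diff_divide_distrib)
qed

lemma starts_only_density_double_length:
  assumes "2 \<le> q" "3 \<le> length P" "set P \<subseteq> {..<q}"
  shows "1 / 2 \<le> starts_only_density q P (2 * length P - 1)"
proof -
  have "real q ^ (length P - 1) \<le> 2 * real (card (starts_only q P (2 * length P - 1)))"
    using card_starts_only_double_length[OF assms] by (metis of_nat_le_iff of_nat_mult of_nat_numeral of_nat_power)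
  moreover have "2 * length P - 1 - length P = length P - 1" by simp
  moreover have "0 < real q ^ (length P - 1)" using assms(1) by simp
  ultimately show ?thesis by (simp add: starts_only_density_def field_simps)
qed

lemma starts_only_density_lower_bound:
  assumes q: "2 \<le> q" and P: "3 \<le> length P" "set P \<subseteq> {..<q}"
    and N: "3 * length P \<le> N + 2" "N < q ^ (length P + 1)"
  shows "exp (- 2 * real q) / 2 - (real q + 1) * real (length P) / real q ^ length P
    \<le> starts_only_density q P (N + 1 - length P)"
proof -
  let ?p = "length P"
  let ?a = "starts_only_density q P"
  define e where "e = 1 / real q ^ ?p"
  define n where "n = N + 2 - 3 * ?p"
  have "2 \<le> q ^ ?p" using q P(1) power_increasing[of 1 ?p q] by simp
  then have "2 \<le> real q ^ ?p" by (metis of_nat_le_iff of_nat_numeral of_nat_power)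
  have e: "0 \<le> e" "e \<le> 1 / 2"
    unfolding e_def using \<open>2 \<le> real q ^ ?p\<close> q by (simp, intro divide_left_mono) simp_all
  have rec: "?a L - e * ?a (L + 1 - ?p) \<le> ?a (L + 1)" if "2 * ?p - 1 \<le> L" for L
    using starts_only_density_step[of q P L] q that by (simp add: e_def)
  have idx: "N + 1 - ?p = 2 * ?p - 1 + n" using N(1) P(1) by (simp add: n_def)
  have "(1 - e) ^ n * (1 / 2) - real (min n ?p) * e - real n * real ?p * e ^ 2
      \<le> ?a (N + 1 - ?p)"
    unfolding idx by (rule delayed_recurrence_lower_bound[where a = ?a and s = "2 * ?p - 1"])
      (use starts_only_density_bounds rec e starts_only_density_double_length[OF q P] P(1) in auto)
  moreover have "real n * e < real q"
  proof -
    have "n \<le> N" using P(1) by (simp add: n_def)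
    then have "n < q * q ^ ?p" using N(2) by simp
    then have "real n < real q * real q ^ ?p" by (metis of_nat_less_iff of_nat_mult of_nat_power)
    then show ?thesis using \<open>2 \<le> real q ^ ?p\<close> q by (simp add: e_def divide_less_eq)
  qed
  moreover have "exp (- 2 * real q) \<le> (1 - e) ^ n"
    using \<open>real n * e < real q\<close> by (intro exp_le_one_minus_power[OF e]) simp
  moreover have "real (min n ?p) * e \<le> real ?p * e" using e by (intro mult_right_mono) simp_all
  moreover have "real n * real ?p * e ^ 2 \<le> real q * (real ?p * e)"
  proof -
    have "real n * real ?p * e ^ 2 = (real n * e) * (real ?p * e)"
      by (simp add: power2_eq_square algebra_simps)
    also have "\<dots> \<le> real q * (real ?p * e)"
      using \<open>real n * e < real q\<close> e by (intro mult_right_mono) simp_all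
    finally show ?thesis .
  qed
  moreover have "(real q + 1) * real ?p / real q ^ ?p = real ?p * e + real q * (real ?p * e)"
    by (simp add: e_def field_simps add_divide_distrib)
  ultimately show ?thesis by linarith
qed

lemma G_ge_starts_only_density:
  assumes q: "2 \<le> q" and P: "3 \<le> length P" "set P \<subseteq> {..<q}" and N: "3 * length P \<le> N + 2"
  shows "starts_only_density q P (N + 1 - length P) * real q ^ (N - length P) / 2
    \<le> real (G q P N) + real (length P - 1) * real q ^ (N - 2 * length P)"
proof -
  let ?p = "length P"
  let ?A = "starts_only q P (N + 1 - ?p)"
  let ?B = "ends_only q P (2 * ?p - 1)"
  have "card ?A * card ?B \<le> G q P N + (?p - 1) * q ^ (N - 2 * ?p)"
    by (rule card_starts_ends_only_le_G) (use N P in auto)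
  then have glue: "real (card ?A) * real (card ?B)
      \<le> real (G q P N) + real (?p - 1) * real q ^ (N - 2 * ?p)"
    by (metis of_nat_add of_nat_le_iff of_nat_mult of_nat_power)
  have "real q ^ (?p - 1) \<le> 2 * real (card (starts_only q (rev P) (2 * ?p - 1)))"
    using card_starts_only_double_length[of q "rev P"] q P
    by (metis length_rev set_rev of_nat_le_iff of_nat_mult of_nat_numeral of_nat_power)
  also have "\<dots> \<le> 2 * real (card ?B)"
    using card_starts_only_rev_le[of q P "2 * ?p - 1"] by simp
  finally have B: "real q ^ (?p - 1) / 2 \<le> real (card ?B)" by simp
  have "N + 1 - ?p - ?p + (?p - 1) = N - ?p" using N P by linarith
  then have "real q ^ (N - ?p) = real q ^ (N + 1 - ?p - ?p) * real q ^ (?p - 1)"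
    by (metis power_add)
  moreover have "real (card ?A)
      = starts_only_density q P (N + 1 - ?p) * real q ^ (N + 1 - ?p - ?p)"
    using q by (simp add: starts_only_density_def)
  ultimately have "starts_only_density q P (N + 1 - ?p) * real q ^ (N - ?p) / 2
      = real (card ?A) * (real q ^ (?p - 1) / 2)"
    by (simp add: algebra_simps)
  also have "\<dots> \<le> real (card ?A) * real (card ?B)" using B by (intro mult_left_mono) simp_all
  finally show ?thesis using glue by linarith
qed

lemma G_lower_bound_scaled:
  assumes q: "2 \<le> q" and P: "3 \<le> length P" "set P \<subseteq> {..<q}"
    and N: "3 * length P \<le> N + 2" "N < q ^ (length P + 1)"
  shows "(exp (- 2 * real q) / 4 - (real q + 2) * real (length P) / real q ^ length P)
    * real q ^ (N - length P) \<le> real (G q P N)"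
proof -
  let ?p = "length P"
  define E where "E = exp (- 2 * real q)"
  define e where "e = 1 / real q ^ ?p"
  define R where "R = real q ^ (N - ?p)"
  define Y where "Y = real ?p * e * R"
  have "0 < R" "0 < real q ^ ?p" using q by (simp_all add: R_def)
  have "N - ?p = ?p + (N - 2 * ?p)" using N P by linarith
  then have "R = real q ^ ?p * real q ^ (N - 2 * ?p)" unfolding R_def by (metis power_add)
  then have "real q ^ (N - 2 * ?p) = e * R" using \<open>0 < real q ^ ?p\<close> by (simp add: e_def)
  moreover have "real (?p - 1) * real q ^ (N - 2 * ?p) \<le> real ?p * real q ^ (N - 2 * ?p)"
    by (intro mult_right_mono) simp_all
  ultimately have "real (?p - 1) * real q ^ (N - 2 * ?p) \<le> Y" by (simp add: Y_def mult.assoc)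
  moreover have "(E / 2 - (real q + 1) * real ?p * e) * R / 2
      \<le> starts_only_density q P (N + 1 - ?p) * R / 2"
    using starts_only_density_lower_bound[OF q P N] \<open>0 < R\<close>
    by (intro divide_right_mono mult_right_mono) (simp_all add: E_def e_def)
  moreover have "0 \<le> Y" "0 \<le> real q * Y" using \<open>0 < R\<close> by (simp_all add: Y_def e_def)
  moreover have "(E / 2 - (real q + 1) * real ?p * e) * R / 2 = E * R / 4 - real q * Y / 2 - Y / 2"
    by (simp add: Y_def field_simps)
  moreover have "(E / 4 - (real q + 2) * real ?p / real q ^ ?p) * R = E * R / 4 - real q * Y - 2 * Y"
    using \<open>0 < real q ^ ?p\<close> by (simp add: Y_def e_def field_simps)
  ultimately show ?thesis
    using G_ge_starts_only_density[OF q P N(1)] unfolding E_def R_def by linarith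
qed

lemma G_lower_bound:
  assumes q: "2 \<le> q" and P: "3 \<le> length P" "set P \<subseteq> {..<q}"
    and small: "(real q + 2) * real (length P) / real q ^ length P \<le> exp (- 2 * real q) / 8"
    and N: "real q ^ length P \<le> real q * real N" "N < q ^ (length P + 1)"
  shows "exp (- 2 * real q) / (8 * real q ^ 2) * real q ^ (N + length P) / real (N + length P) ^ 2
    \<le> real (G q P N)"
proof -
  let ?p = "length P"
  define E where "E = exp (- 2 * real q)"
  define R where "R = real q ^ (N - ?p)"
  have "0 < E" "E \<le> 1" "0 < R" "0 < real q ^ ?p" using q by (simp_all add: E_def R_def)
  have "(real q + 2) * real ?p \<le> E / 8 * real q ^ ?p"
    using small \<open>0 < real q ^ ?p\<close> by (simp add: E_def pos_divide_le_eq)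
  also have "\<dots> \<le> real q ^ ?p / 8"
    using \<open>E \<le> 1\<close> \<open>0 < real q ^ ?p\<close> by (simp add: mult_left_le_one_le)
  also have "\<dots> \<le> real q * real N / 8" using N(1) by simp
  also have "\<dots> \<le> (real q + 2) * (real N / 8)" by (simp add: field_simps)
  finally have "8 * ?p \<le> N" using q by simp
  then have "3 * ?p \<le> N + 2" "?p \<le> N" by linarith+
  have "(E / 4 - (real q + 2) * real ?p / real q ^ ?p) * R \<le> real (G q P N)"
    unfolding E_def R_def by (rule G_lower_bound_scaled[OF q P \<open>3 * ?p \<le> N + 2\<close> N(2)])
  moreover have "E / 8 * R \<le> (E / 4 - (real q + 2) * real ?p / real q ^ ?p) * R"
    using small \<open>0 < R\<close> by (intro mult_right_mono) (simp_all add: E_def)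
  ultimately have G: "E / 8 * R \<le> real (G q P N)" by linarith
  have "N + ?p = (N - ?p) + ?p * 2" using \<open>?p \<le> N\<close> by simp
  then have pw: "real q ^ (N + ?p) = R * (real q ^ ?p) ^ 2"
    unfolding R_def by (metis power_add power_mult)
  have "real q ^ ?p \<le> real q * real (N + ?p)"
    using N(1) q by (smt (verit) mult_left_mono of_nat_0_le_iff of_nat_add)
  then have "(real q ^ ?p) ^ 2 \<le> (real q * real (N + ?p)) ^ 2"
    using \<open>0 < real q ^ ?p\<close> by (intro power_mono) simp_all
  then have ratio: "(real q ^ ?p) ^ 2 / real (N + ?p) ^ 2 \<le> real q ^ 2"
    using P by (simp add: divide_le_eq power_mult_distrib)
  have "E / (8 * real q ^ 2) * real q ^ (N + ?p) / real (N + ?p) ^ 2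
      = E / (8 * real q ^ 2) * R * ((real q ^ ?p) ^ 2 / real (N + ?p) ^ 2)"
    by (simp add: pw)
  also have "\<dots> \<le> E / (8 * real q ^ 2) * R * real q ^ 2"
    using ratio \<open>0 < E\<close> \<open>0 < R\<close> by (intro mult_left_mono) simp_all
  also have "\<dots> = E / 8 * R" using q by simp
  finally show ?thesis using G unfolding E_def by linarith
qed

lemma ln_ratio_bracket:
  assumes q: "2 \<le> q"
    and lower: "ln (real q) / (real q - 1) * real q ^ p \<le> real N"
    and upper: "real N < ln (real q) / (real q - 1) * real q ^ (p + 1)"
  shows "real q ^ p \<le> real q * real N" "N < q ^ (p + 1)"
proof -
  define c where "c = ln (real q) / (real q - 1)"
  have "ln (real q) \<le> real q - 1" using q by (intro ln_le_minus_one) simp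
  then have "c \<le> 1" using q by (simp add: c_def divide_le_eq)
  have "ln (1 / real q) \<le> 1 / real q - 1" using q by (intro ln_le_minus_one) simp
  then have "(real q - 1) / real q \<le> ln (real q)" using q by (simp add: ln_div diff_divide_distrib)
  then have "1 / real q \<le> c" using q by (simp add: c_def field_simps)
  have "real q ^ p = real q * (1 / real q * real q ^ p)" using q by simp
  also have "\<dots> \<le> real q * (c * real q ^ p)"
    using \<open>1 / real q \<le> c\<close> by (intro mult_left_mono mult_right_mono) simp_all
  also have "\<dots> \<le> real q * real N"
    using mult_left_mono[OF lower, of "real q"] by (simp add: c_def)
  finally show "real q ^ p \<le> real q * real N" .
  have "real N < c * real q ^ (p + 1)" using upper by (simp add: c_def)
  also have "\<dots> \<le> real q ^ (p + 1)"
    using mult_right_mono[OF \<open>c \<le> 1\<close>, of "real q ^ (p + 1)"] by simp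
  finally show "N < q ^ (p + 1)" by (metis of_nat_less_iff of_nat_power)
qed

lemma eventually_mult_of_nat_div_power_le:
  fixes x :: real
  assumes "1 < x" "0 < c"
  shows "eventually (\<lambda>n. a * real n / x ^ n \<le> c) sequentially"
proof -
  have "(\<lambda>n. a * (real n / x ^ n)) \<longlonglongrightarrow> a * 0"
    using lim_n_over_pown[of x] assms(1) by (intro tendsto_mult tendsto_const) simp
  then have "eventually (\<lambda>n. a * (real n / x ^ n) < c) sequentially"
    using assms(2) by (simp add: order_tendstoD(2))
  then show ?thesis by eventually_elim simp
qed

theorem lemma5:
  fixes q :: nat
  assumes "q \<ge> 2"
  shows "\<exists>(N0::nat) (d::real). d > 0 \<and>
    (\<forall>(N::nat) (p::nat) (P::nat list).
       N > N0 \<longrightarrow>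
       ln (real q) / (real q - 1) * real q ^ p \<le> real N \<longrightarrow>
       real N < ln (real q) / (real q - 1) * real q ^ (p + 1) \<longrightarrow>
       P \<in> q_words q p \<longrightarrow>
       real (G q P N) \<ge> d * real q ^ (N + p) / real (N + p) ^ 2)"
proof -
  define E where "E = exp (- 2 * real q)"
  obtain p0 where small: "\<And>p. p0 \<le> p \<Longrightarrow> (real q + 2) * real p / real q ^ p \<le> E / 8"
    using eventually_mult_of_nat_div_power_le[of "real q" "E / 8" "real q + 2"] assms
    by (auto simp: E_def eventually_sequentially)
  show ?thesis
  proof (intro exI conjI allI impI)
    show "0 < E / (8 * real q ^ 2)" using assms by (simp add: E_def)
    fix N p :: nat and P :: "nat list"
    assume "q ^ (max p0 3 + 1) < N"
      and lower: "ln (real q) / (real q - 1) * real q ^ p \<le> real N"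
      and upper: "real N < ln (real q) / (real q - 1) * real q ^ (p + 1)"
      and "P \<in> q_words q p"
    then have P: "length P = p" "set P \<subseteq> {..<q}" by (auto simp: q_words_def)
    note N = ln_ratio_bracket[OF assms lower upper]
    have "q ^ (max p0 3 + 1) < q ^ (p + 1)" using \<open>q ^ (max p0 3 + 1) < N\<close> N(2) by linarith
    then have "max p0 3 + 1 < p + 1" by (rule power_less_imp_less_exp[rotated]) (use assms in simp)
    then have "3 \<le> p" "p0 \<le> p" by simp_all
    then show "E / (8 * real q ^ 2) * real q ^ (N + p) / real (N + p) ^ 2 \<le> real (G q P N)"
      using G_lower_bound[OF assms _ P(2)] small[of p] N unfolding E_def P(1) by blast
  qed
qed

end
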